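(* Let $G$ be a finite simple graph of order $n$ without isolated vertices such that its maximum degree is $\Delta(G)=n-1$. Then $\gamma_t(G)=2$ and $TDV(v)\le n-1$ for every $v\in V(G)$; moreover $TDV(v)=n-1$ if and only if $\deg(v)=n-1$.
   Context: A set $D \subseteq V(G)$ is a total dominating set of $G$ if every vertex of $G$ has a neighbor in $D$. $\gamma_t(G)$ is the minimum cardinality of a total dominating set; a minimum one is a $\gamma_t(G)$-set. $TDV(v)$ is the number of $\gamma_t(G)$-sets containing $v$. *)

theory Defs
  imports Main
begin

definition simple_graph :: "'a set \<Rightarrow> ('a \<Rightarrow> 'a \<Rightarrow> bool) \<Rightarrow> bool" where
  "simple_graph V E \<longleftrightarrow> finite V \<and> (\<forall>x y. E x y \<longrightarrow> x \<in> V \<and> y \<in> V)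
     \<and> (\<forall>x y. E x y \<longrightarrow> E y x) \<and> (\<forall>x. \<not> E x x)"

definition nbhd :: "'a set \<Rightarrow> ('a \<Rightarrow> 'a \<Rightarrow> bool) \<Rightarrow> 'a \<Rightarrow> 'a set" where
  "nbhd V E v = {u \<in> V. E v u}"

definition degree :: "'a set \<Rightarrow> ('a \<Rightarrow> 'a \<Rightarrow> bool) \<Rightarrow> 'a \<Rightarrow> nat" where
  "degree V E v = card (nbhd V E v)"

definition max_degree :: "'a set \<Rightarrow> ('a \<Rightarrow> 'a \<Rightarrow> bool) \<Rightarrow> nat" where
  "max_degree V E = Max (degree V E ` V)"

definition total_dominating_set :: "'a set \<Rightarrow> ('a \<Rightarrow> 'a \<Rightarrow> bool) \<Rightarrow> 'a set \<Rightarrow> bool" where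
  "total_dominating_set V E D \<longleftrightarrow> D \<subseteq> V \<and> (\<forall>v\<in>V. \<exists>u\<in>D. E v u)"

definition total_domination_number :: "'a set \<Rightarrow> ('a \<Rightarrow> 'a \<Rightarrow> bool) \<Rightarrow> nat" where
  "total_domination_number V E = (LEAST k. \<exists>D. total_dominating_set V E D \<and> card D = k)"

definition gamma_t_set :: "'a set \<Rightarrow> ('a \<Rightarrow> 'a \<Rightarrow> bool) \<Rightarrow> 'a set \<Rightarrow> bool" where
  "gamma_t_set V E D \<longleftrightarrow> total_dominating_set V E D \<and> card D = total_domination_number V E"

definition TDV :: "'a set \<Rightarrow> ('a \<Rightarrow> 'a \<Rightarrow> bool) \<Rightarrow> 'a \<Rightarrow> nat" where
  "TDV V E v = card {D. gamma_t_set V E D \<and> v \<in> D}"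

end

theory Submission
  imports Defs
begin

text \<open>A total dominating set has at least two vertices, since a vertex of it must itself be
  dominated by another one. A vertex \<open>w\<close> of degree \<open>n - 1\<close> is adjacent to everything, so
  \<open>{w, u}\<close> is total dominating for every neighbour \<open>u\<close>; hence \<open>\<gamma>\<^sub>t = 2\<close>. A \<open>\<gamma>\<^sub>t\<close>-set containing \<open>v\<close>
  then has the form \<open>{v, u}\<close> with \<open>u\<close> a neighbour of \<open>v\<close>, so \<open>TDV(v) \<le> deg(v) \<le> n - 1\<close>, and
  every such pair is a \<open>\<gamma>\<^sub>t\<close>-set exactly when \<open>v\<close> is adjacent to all other vertices.\<close>

lemma simple_graphD:
  assumes "simple_graph V E"
  shows "finite V" and "E x y \<Longrightarrow> E y x" and "\<not> E x x" and "E x y \<Longrightarrow> x \<in> V" and "E x y \<Longrightarrow> y \<in> V"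
  using assms unfolding simple_graph_def by auto

lemma nbhd_subset:
  assumes "simple_graph V E"
  shows "nbhd V E v \<subseteq> V - {v}"
  using simple_graphD(3)[OF assms] unfolding nbhd_def by auto

lemma degree_le_card_minus_one:
  assumes "simple_graph V E" and "v \<in> V"
  shows "degree V E v \<le> card V - 1"
proof -
  have "card (nbhd V E v) \<le> card (V - {v})"
    using nbhd_subset[OF assms(1)] simple_graphD(1)[OF assms(1)] by (intro card_mono) auto
  then show ?thesis
    using assms(2) simple_graphD(1)[OF assms(1)] by (simp add: degree_def)
qed

lemma degree_eq_card_minus_one_iff:
  assumes "simple_graph V E" and "v \<in> V"
  shows "degree V E v = card V - 1 \<longleftrightarrow> nbhd V E v = V - {v}"
proof -
  have "finite (V - {v})" and "card (V - {v}) = card V - 1"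
    using assms(2) simple_graphD(1)[OF assms(1)] by auto
  then show ?thesis
    using nbhd_subset[OF assms(1)] card_subset_eq unfolding degree_def by metis
qed

lemma total_dominating_set_card_ge_two:
  assumes "simple_graph V E" and "V \<noteq> {}" and D: "total_dominating_set V E D"
  shows "2 \<le> card D"
proof -
  obtain v where "v \<in> V" using assms(2) by auto
  then obtain u where u: "u \<in> D" "E v u"
    using D unfolding total_dominating_set_def by auto
  then obtain u' where u': "u' \<in> D" "E u u'"
    using D simple_graphD(5)[OF assms(1)] unfolding total_dominating_set_def by blast
  have "u \<noteq> u'" using u' simple_graphD(3)[OF assms(1)] by auto
  moreover have "finite D"
    using D simple_graphD(1)[OF assms(1)] unfolding total_dominating_set_def by (auto intro: finite_subset)
  ultimately have "card {u, u'} \<le> card D" using u u' by (intro card_mono) auto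
  then show ?thesis using \<open>u \<noteq> u'\<close> by simp
qed

lemma total_domination_number_eq_two:
  assumes "simple_graph V E" and "V \<noteq> {}"
    and "total_dominating_set V E D" and "card D = 2"
  shows "total_domination_number V E = 2"
  unfolding total_domination_number_def
  using assms total_dominating_set_card_ge_two by (intro Least_equality) blast+

lemma total_dominating_set_universal_pair:
  assumes "simple_graph V E" and "nbhd V E v = V - {v}" and "E v u"
  shows "total_dominating_set V E {v, u}"
proof -
  have "\<And>x. x \<in> V \<Longrightarrow> x \<noteq> v \<Longrightarrow> E v x"
    using assms(2) unfolding nbhd_def by auto
  then show ?thesis
    unfolding total_dominating_set_def
    using assms(3) simple_graphD[OF assms(1)] by blast
qed

lemma gamma_t_sets_containing_subset:
  assumes "simple_graph V E" and "total_domination_number V E = 2"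
  shows "{D. gamma_t_set V E D \<and> v \<in> D} \<subseteq> (\<lambda>u. {v, u}) ` nbhd V E v"
proof
  fix D assume "D \<in> {D. gamma_t_set V E D \<and> v \<in> D}"
  then have D: "total_dominating_set V E D" "card D = 2" "v \<in> D"
    unfolding gamma_t_set_def assms(2) by auto
  obtain u where u: "u \<in> D" "E v u"
    using D simple_graphD(4)[OF assms(1)] unfolding total_dominating_set_def by blast
  have "u \<noteq> v" using u simple_graphD(3)[OF assms(1)] by auto
  then have "D = {v, u}"
    using D(2,3) u(1) by (auto simp: card_2_iff)
  moreover have "u \<in> nbhd V E v"
    using u simple_graphD(5)[OF assms(1)] unfolding nbhd_def by auto
  ultimately show "D \<in> (\<lambda>u. {v, u}) ` nbhd V E v" by auto
qed

lemma inj_on_insert_nbhd: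
  assumes "simple_graph V E"
  shows "inj_on (\<lambda>u. {v, u}) (nbhd V E v)"
  using simple_graphD(3)[OF assms] unfolding inj_on_def nbhd_def by (auto simp: doubleton_eq_iff)

lemma TDV_le_degree:
  assumes "simple_graph V E" and "total_domination_number V E = 2"
  shows "TDV V E v \<le> degree V E v"
proof -
  have "finite (nbhd V E v)"
    using simple_graphD(1)[OF assms(1)] unfolding nbhd_def by auto
  then have "card {D. gamma_t_set V E D \<and> v \<in> D} \<le> card ((\<lambda>u. {v, u}) ` nbhd V E v)"
    using gamma_t_sets_containing_subset[OF assms] by (intro card_mono) auto
  also have "\<dots> \<le> card (nbhd V E v)" by (rule card_image_le) fact
  finally show ?thesis unfolding TDV_def degree_def .
qed

lemma TDV_eq_degree_if_universal:
  assumes "simple_graph V E" and "total_domination_number V E = 2" and "nbhd V E v = V - {v}"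
  shows "TDV V E v = degree V E v"
proof -
  have "(\<lambda>u. {v, u}) ` nbhd V E v \<subseteq> {D. gamma_t_set V E D \<and> v \<in> D}"
  proof
    fix D assume "D \<in> (\<lambda>u. {v, u}) ` nbhd V E v"
    then obtain u where u: "E v u" "D = {v, u}" unfolding nbhd_def by auto
    then have "u \<noteq> v" using simple_graphD(3)[OF assms(1)] by auto
    then show "D \<in> {D. gamma_t_set V E D \<and> v \<in> D}"
      using total_dominating_set_universal_pair[OF assms(1,3) u(1)] u(2)
      unfolding gamma_t_set_def assms(2) by auto
  qed
  then have "{D. gamma_t_set V E D \<and> v \<in> D} = (\<lambda>u. {v, u}) ` nbhd V E v"
    using gamma_t_sets_containing_subset[OF assms(1,2)] by blast
  then show ?thesis
    unfolding TDV_def degree_def using card_image[OF inj_on_insert_nbhd[OF assms(1)]] by simp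
qed

theorem proposition2p13:
  fixes V :: "'a set" and E :: "'a \<Rightarrow> 'a \<Rightarrow> bool"
  assumes "simple_graph V E"
    and "V \<noteq> {}"
    and "\<forall>v\<in>V. degree V E v \<ge> 1"
    and "max_degree V E = card V - 1"
  shows "total_domination_number V E = 2
         \<and> (\<forall>v\<in>V. TDV V E v \<le> card V - 1)
         \<and> (\<forall>v\<in>V. TDV V E v = card V - 1 \<longleftrightarrow> degree V E v = card V - 1)"
proof -
  have "max_degree V E \<in> degree V E ` V"
    unfolding max_degree_def using simple_graphD(1)[OF assms(1)] assms(2) by (intro Max_in) auto
  then obtain w where w: "w \<in> V" "degree V E w = card V - 1"
    using assms(4) by auto
  have "nbhd V E w \<noteq> {}" using w(1) assms(3) unfolding degree_def by fastforce
  then obtain u where "E w u" unfolding nbhd_def by auto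
  have w_universal: "nbhd V E w = V - {w}"
    using w degree_eq_card_minus_one_iff[OF assms(1)] by blast
  have "w \<noteq> u" using \<open>E w u\<close> simple_graphD(3)[OF assms(1)] by metis
  then have "card {w, u} = 2" by simp
  then have gamma_t: "total_domination_number V E = 2"
    using total_domination_number_eq_two[OF assms(1,2)]
      total_dominating_set_universal_pair[OF assms(1) w_universal \<open>E w u\<close>] by blast
  have "TDV V E v \<le> card V - 1" if "v \<in> V" for v
    using TDV_le_degree[OF assms(1) gamma_t] degree_le_card_minus_one[OF assms(1) that] le_trans by blast
  moreover have "TDV V E v = card V - 1 \<longleftrightarrow> degree V E v = card V - 1" if "v \<in> V" for v
    using TDV_le_degree[OF assms(1) gamma_t, of v] degree_le_card_minus_one[OF assms(1) that]
      TDV_eq_degree_if_universal[OF assms(1) gamma_t] degree_eq_card_minus_one_iff[OF assms(1) that]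
    by fastforce
  ultimately show ?thesis using gamma_t by blast
qed

end
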